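(* Let $(\mathcal{M},\delta)$ be a finite metric space and $k$ an integer with $2\le k<|\mathcal{M}|$. Let $\alpha=\min\{GR_P : P\subset\mathcal{M},\ |P|=k\}$ be the optimal gap ratio, and let $S_k$ be the output of the farthest-point-insertion procedure: choose $q_1,q_2\in\mathcal{M}$ with $\delta(q_1,q_2)=\operatorname{diam}(\mathcal{M})$, set $S_2=\{q_1,q_2\}$, and for $i=2,\dots,k-1$ let $q_{i+1}$ be any point of $\mathcal{M}$ maximizing $\delta(\cdot,S_i)$ and set $S_{i+1}=S_i\cup\{q_{i+1}\}$. Then $GR_{S_k}\le\rho\,\alpha$, where: (i) if $\alpha\ge1$, $\rho=\frac{2}{\alpha}\le 2$; (ii) if $\frac23\le\alpha<1$, $\rho=\frac{2}{\alpha}\le3$; (iii) if $\alpha<\frac23$, $\rho=\frac{4}{2-\alpha}<3$.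
   Context: For a metric space $(\mathcal{M},\delta)$ and a finite nonempty set $S\subset\mathcal{M}$, $\delta(x,S)=\min_{s\in S}\delta(x,s)$ and $R_S=\sup_{x\in\mathcal{M}}\delta(x,S)$; if $|S|\ge2$, $r_S=\min_{p,q\in S,\,p\ne q}\delta(p,q)/2$ and the gap ratio is $GR_S=R_S/r_S$. *)

theory Defs
  imports Main "HOL.Real"
begin

definition metric_on :: "'a set \<Rightarrow> ('a \<Rightarrow> 'a \<Rightarrow> real) \<Rightarrow> bool" where
  "metric_on M d \<longleftrightarrow>
     (\<forall>x\<in>M. \<forall>y\<in>M. 0 \<le> d x y \<and> (d x y = 0 \<longleftrightarrow> x = y) \<and> d x y = d y x) \<and>
     (\<forall>x\<in>M. \<forall>y\<in>M. \<forall>z\<in>M. d x z \<le> d x y + d y z)"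

definition dist_set :: "('a \<Rightarrow> 'a \<Rightarrow> real) \<Rightarrow> 'a \<Rightarrow> 'a set \<Rightarrow> real" where
  "dist_set d x S = Min ((\<lambda>s. d x s) ` S)"

definition covering_radius :: "'a set \<Rightarrow> ('a \<Rightarrow> 'a \<Rightarrow> real) \<Rightarrow> 'a set \<Rightarrow> real" where
  "covering_radius M d S = Max ((\<lambda>x. dist_set d x S) ` M)"

definition packing_radius :: "('a \<Rightarrow> 'a \<Rightarrow> real) \<Rightarrow> 'a set \<Rightarrow> real" where
  "packing_radius d S = Min {d p q | p q. p \<in> S \<and> q \<in> S \<and> p \<noteq> q} / 2"

definition gap_ratio :: "'a set \<Rightarrow> ('a \<Rightarrow> 'a \<Rightarrow> real) \<Rightarrow> 'a set \<Rightarrow> real" where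
  "gap_ratio M d S = covering_radius M d S / packing_radius d S"

definition diameter :: "'a set \<Rightarrow> ('a \<Rightarrow> 'a \<Rightarrow> real) \<Rightarrow> real" where
  "diameter M d = Max {d p q | p q. p \<in> M \<and> q \<in> M}"

definition opt_gap_ratio :: "'a set \<Rightarrow> ('a \<Rightarrow> 'a \<Rightarrow> real) \<Rightarrow> nat \<Rightarrow> real" where
  "opt_gap_ratio M d k = Min {gap_ratio M d P | P. P \<subset> M \<and> card P = k}"

definition rho :: "real \<Rightarrow> real" where
  "rho \<alpha> = (if 2/3 \<le> \<alpha> then 2 / \<alpha> else 4 / (2 - \<alpha>))"

definition fpi_run :: "'a set \<Rightarrow> ('a \<Rightarrow> 'a \<Rightarrow> real) \<Rightarrow> nat \<Rightarrow> (nat \<Rightarrow> 'a) \<Rightarrow> bool" where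
  "fpi_run M d k q \<longleftrightarrow>
     q 1 \<in> M \<and> q 2 \<in> M \<and> d (q 1) (q 2) = diameter M d \<and>
     (\<forall>i. 2 \<le> i \<and> i \<le> k - 1 \<longrightarrow>
        q (i+1) \<in> M \<and>
        (\<forall>x\<in>M. dist_set d x (q ` {1..i}) \<le> dist_set d (q (i+1)) (q ` {1..i})))"

end

theory Submission
  imports Defs
begin

text \<open>Let S be the greedy k-set, T the first k - 1 greedy points and P an optimal k-set.
  Any two greedy points q_i, q_j (i < j) are at least as far apart as q_j is from its
  predecessors, which is at least the distance of q_k, and hence of every point, from T;
  so R_S \<le> R_T \<le> 2 r_S. Two pigeonhole arguments compare with P: two points of P share a
  nearest point of T, so 2 r_P \<le> R_T + R_P; and either two points of S share a nearest
  point of P, so 2 r_S \<le> 2 R_P, or every point of P is the nearest one of some point of S,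
  so R_S \<le> 2 R_P. Eliminating r_P and R_P with \<alpha> = R_P / r_P gives the bound.\<close>

lemma dist_set_le: "finite S \<Longrightarrow> s \<in> S \<Longrightarrow> dist_set d x S \<le> d x s"
  unfolding dist_set_def by (rule Min_le) auto

lemma dist_set_attained:
  assumes "finite S" "S \<noteq> {}"
  obtains s where "s \<in> S" "dist_set d x S = d x s"
proof -
  have "Min ((\<lambda>s. d x s) ` S) \<in> (\<lambda>s. d x s) ` S" using assms by (intro Min_in) auto
  then show ?thesis using that unfolding dist_set_def by auto
qed

lemma dist_set_antimono:
  assumes "finite S'" "S \<noteq> {}" "S \<subseteq> S'"
  shows "dist_set d x S' \<le> dist_set d x S"
proof -
  obtain s where "s \<in> S" "dist_set d x S = d x s"
    using dist_set_attained assms finite_subset by metis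
  then show ?thesis using assms dist_set_le by fastforce
qed

lemma dist_set_le_covering_radius:
  "finite M \<Longrightarrow> x \<in> M \<Longrightarrow> dist_set d x S \<le> covering_radius M d S"
  unfolding covering_radius_def by (rule Max_ge) auto

lemma covering_radius_attained:
  assumes "finite M" "M \<noteq> {}"
  obtains x where "x \<in> M" "covering_radius M d S = dist_set d x S"
proof -
  have "Max ((\<lambda>x. dist_set d x S) ` M) \<in> (\<lambda>x. dist_set d x S) ` M"
    using assms by (intro Max_in) auto
  then show ?thesis using that unfolding covering_radius_def by auto
qed

lemma covering_radius_le:
  "finite M \<Longrightarrow> M \<noteq> {} \<Longrightarrow> (\<And>x. x \<in> M \<Longrightarrow> dist_set d x S \<le> c) \<Longrightarrow> covering_radius M d S \<le> c"
  by (metis covering_radius_attained)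

lemma covering_radius_antimono:
  "finite M \<Longrightarrow> M \<noteq> {} \<Longrightarrow> finite S \<Longrightarrow> T \<noteq> {} \<Longrightarrow> T \<subseteq> S
    \<Longrightarrow> covering_radius M d S \<le> covering_radius M d T"
  by (meson covering_radius_le dist_set_antimono dist_set_le_covering_radius order_trans)

lemma covering_radius_nonneg:
  assumes "finite M" "metric_on M d" "S \<subseteq> M" "S \<noteq> {}"
  shows "0 \<le> covering_radius M d S"
proof -
  have "M \<noteq> {}" "finite S" using assms(1,3,4) finite_subset by auto
  then obtain x where x: "x \<in> M" "covering_radius M d S = dist_set d x S"
    using covering_radius_attained assms(1) by metis
  moreover obtain s where "s \<in> S" "dist_set d x S = d x s"
    using dist_set_attained \<open>finite S\<close> assms(4) .
  ultimately show ?thesis using assms(2,3) unfolding metric_on_def by auto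
qed

lemma finite_pairwise_distances:
  "finite S \<Longrightarrow> finite {d p q | p q. p \<in> S \<and> q \<in> S \<and> P p q}"
proof -
  assume "finite S"
  moreover have "{d p q | p q. p \<in> S \<and> q \<in> S \<and> P p q} \<subseteq> (\<lambda>(p, q). d p q) ` (S \<times> S)"
    by auto
  ultimately show ?thesis by (meson finite_SigmaI finite_imageI finite_subset)
qed

lemma packing_radius_le:
  "finite S \<Longrightarrow> p \<in> S \<Longrightarrow> p' \<in> S \<Longrightarrow> p \<noteq> p' \<Longrightarrow> 2 * packing_radius d S \<le> d p p'"
  unfolding packing_radius_def by (simp, intro Min_le finite_pairwise_distances) auto

lemma packing_radius_attained:
  assumes "finite S" "p \<in> S" "p' \<in> S" "p \<noteq> p'"
  obtains a b where "a \<in> S" "b \<in> S" "a \<noteq> b" "2 * packing_radius d S = d a b"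
proof -
  have "Min {d a b | a b. a \<in> S \<and> b \<in> S \<and> a \<noteq> b} \<in> {d a b | a b. a \<in> S \<and> b \<in> S \<and> a \<noteq> b}"
    using assms by (intro Min_in finite_pairwise_distances) auto
  then show ?thesis using that unfolding packing_radius_def by auto
qed

lemma two_le_card_obtains_distinct:
  assumes "2 \<le> card A"
  obtains a b where "a \<in> A" "b \<in> A" "a \<noteq> b"
proof -
  obtain a B where "A = insert a B" "a \<notin> B" "1 \<le> card B"
    using assms card_le_Suc_iff[of 1 A] by auto
  moreover then obtain b where "b \<in> B" by fastforce
  ultimately show ?thesis using that by blast
qed

lemma packing_radius_pos:
  assumes "metric_on M d" "S \<subseteq> M" "2 \<le> card S"
  shows "0 < packing_radius d S"
proof -
  have "finite S" using assms(3) card.infinite by fastforce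
  obtain p p' where "p \<in> S" "p' \<in> S" "p \<noteq> p'"
    using two_le_card_obtains_distinct assms(3) .
  then obtain a b where "a \<in> S" "b \<in> S" "a \<noteq> b" "2 * packing_radius d S = d a b"
    by (rule packing_radius_attained[OF \<open>finite S\<close>])
  then show ?thesis using assms(1,2) unfolding metric_on_def by (smt (verit) subsetD)
qed

lemma diameter_ge: "finite M \<Longrightarrow> x \<in> M \<Longrightarrow> y \<in> M \<Longrightarrow> d x y \<le> diameter M d"
  unfolding diameter_def by (auto intro: Max_ge finite_pairwise_distances[where P = "\<lambda>_ _. True", simplified])

lemma opt_gap_ratio_attained:
  assumes "finite M" "k < card M"
  obtains P where "P \<subset> M" "card P = k" "opt_gap_ratio M d k = gap_ratio M d P"
proof -
  let ?A = "{gap_ratio M d P | P. P \<subset> M \<and> card P = k}"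
  have "?A \<subseteq> gap_ratio M d ` Pow M" by auto
  then have "finite ?A" using assms(1) finite_subset by blast
  moreover obtain P where "P \<subseteq> M" "card P = k"
    using obtain_subset_with_card_n assms(2) by (metis less_imp_le)
  then have "?A \<noteq> {}" using assms(2) by auto
  ultimately have "opt_gap_ratio M d k \<in> ?A" unfolding opt_gap_ratio_def by (rule Min_in)
  then show ?thesis using that by blast
qed

lemma metric_on_sym: "metric_on M d \<Longrightarrow> x \<in> M \<Longrightarrow> y \<in> M \<Longrightarrow> d x y = d y x"
  unfolding metric_on_def by blast

lemma metric_on_triangle:
  "metric_on M d \<Longrightarrow> x \<in> M \<Longrightarrow> y \<in> M \<Longrightarrow> z \<in> M \<Longrightarrow> d x z \<le> d x y + d y z"
  unfolding metric_on_def by blast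

lemma metric_on_pos: "metric_on M d \<Longrightarrow> x \<in> M \<Longrightarrow> y \<in> M \<Longrightarrow> x \<noteq> y \<Longrightarrow> 0 < d x y"
  unfolding metric_on_def by (metis order_le_less)

lemma metric_on_zero: "metric_on M d \<Longrightarrow> x \<in> M \<Longrightarrow> d x x = 0"
  unfolding metric_on_def by blast

lemma nearest_point_within_covering_radius:
  assumes "finite M" "x \<in> M" "finite S" "S \<noteq> {}"
  shows "\<exists>s\<in>S. d x s \<le> covering_radius M d S"
proof -
  obtain s where "s \<in> S" "dist_set d x S = d x s" using dist_set_attained assms(3,4) .
  then show ?thesis using dist_set_le_covering_radius[OF assms(1,2)] by metis
qed

lemma twice_packing_radius_le_covering_radii:
  assumes "finite M" "metric_on M d" "P \<subseteq> M" "T \<subseteq> M" "T \<noteq> {}" "card T < card P"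
  shows "2 * packing_radius d P \<le> covering_radius M d T + covering_radius M d P"
proof -
  have fin: "finite P" "finite T" using assms(1,3,4) finite_subset by auto
  have "\<forall>p\<in>P. \<exists>t\<in>T. d p t \<le> covering_radius M d T"
    using nearest_point_within_covering_radius[OF assms(1) _ fin(2) assms(5)] assms(3) by blast
  then obtain g where g: "\<And>p. p \<in> P \<Longrightarrow> g p \<in> T \<and> d p (g p) \<le> covering_radius M d T"
    by metis
  have "g ` P \<subseteq> T" using g by blast
  then have "card (g ` P) < card P" using card_mono[OF fin(2)] assms(6) by (meson le_less_trans)
  then have "\<not> inj_on g P" by (rule pigeonhole)
  then obtain p p' where pp: "p \<in> P" "p' \<in> P" "p \<noteq> p'" "g p = g p'"
    unfolding inj_on_def by blast
  let ?s = "g p"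
  have s: "?s \<in> M" using g pp assms(4) by auto
  obtain p0 where p0: "p0 \<in> P" "d ?s p0 \<le> covering_radius M d P"
    using nearest_point_within_covering_radius[OF assms(1) s fin(1)] pp by auto
  obtain p'' where p'': "p'' \<in> P" "p'' \<noteq> p0" "d p'' ?s \<le> covering_radius M d T"
  proof (cases "p = p0")
    case True
    then show ?thesis using that[of p'] pp g[of p'] by auto
  next
    case False
    then show ?thesis using that[of p] pp g[of p] by auto
  qed
  have "2 * packing_radius d P \<le> d p'' p0"
    by (rule packing_radius_le[OF fin(1) p''(1) p0(1) p''(2)])
  also have "\<dots> \<le> d p'' ?s + d ?s p0"
    using metric_on_triangle[OF assms(2)] assms(3) p'' p0 s by blast
  finally show ?thesis using p'' p0 by linarith
qed

lemma min_covering_twice_packing_le_twice_covering: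
  assumes "finite M" "metric_on M d" "S \<subseteq> M" "P \<subseteq> M" "P \<noteq> {}" "card P \<le> card S"
  shows "min (covering_radius M d S) (2 * packing_radius d S) \<le> 2 * covering_radius M d P"
proof -
  have fin: "finite P" "finite S" using assms(1,3,4) finite_subset by auto
  have "\<forall>s\<in>S. \<exists>p\<in>P. d s p \<le> covering_radius M d P"
    using nearest_point_within_covering_radius[OF assms(1) _ fin(1) assms(5)] assms(3) by blast
  then obtain h where h: "\<And>s. s \<in> S \<Longrightarrow> h s \<in> P \<and> d s (h s) \<le> covering_radius M d P"
    by metis
  have h_sym: "d (h s) s = d s (h s)" if "s \<in> S" for s
    using metric_on_sym[OF assms(2)] assms(3,4) h[OF that] that by blast
  show ?thesis
  proof (cases "inj_on h S")
    case False
    then obtain s t where st: "s \<in> S" "t \<in> S" "s \<noteq> t" "h s = h t"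
      unfolding inj_on_def by blast
    have "2 * packing_radius d S \<le> d s t"
      by (rule packing_radius_le[OF fin(2) st(1-3)])
    also have "\<dots> \<le> d s (h s) + d (h t) t"
      using metric_on_triangle[OF assms(2), of s "h s" t] assms(3,4) st h by auto
    finally show ?thesis using h[of s] h[of t] h_sym[OF st(2)] st by linarith
  next
    case True
    have "h ` S = P"
      using card_seteq[OF fin(1), of "h ` S"] card_image[OF True] h assms(6) by auto
    have "M \<noteq> {}" using assms(4,5) by blast
    then obtain x where x: "x \<in> M" "covering_radius M d S = dist_set d x S"
      by (rule covering_radius_attained[OF assms(1)])
    obtain p where p: "p \<in> P" "d x p \<le> covering_radius M d P"
      using nearest_point_within_covering_radius[OF assms(1) x(1) fin(1) assms(5)] by blast
    then obtain s where s: "s \<in> S" "h s = p" using \<open>h ` S = P\<close> by blast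
    have "covering_radius M d S \<le> d x s" using x(2) dist_set_le[OF fin(2) s(1)] by simp
    also have "\<dots> \<le> d x p + d p s"
      using metric_on_triangle[OF assms(2), of x p s] assms(3,4) x s p by auto
    also have "d p s \<le> covering_radius M d P" using h[OF s(1)] h_sym[OF s(1)] s(2) by simp
    finally show ?thesis using p(2) by linarith
  qed
qed

lemma fpi_run_start: "fpi_run M d k q \<Longrightarrow> q 1 \<in> M \<and> q 2 \<in> M \<and> d (q 1) (q 2) = diameter M d"
  unfolding fpi_run_def by blast

lemma fpi_run_in_carrier:
  assumes "fpi_run M d k q" "1 \<le> i" "i \<le> k"
  shows "q i \<in> M"
proof (cases "i \<le> 2")
  case True
  then have "i = 1 \<or> i = 2" using assms(2) by linarith
  then show ?thesis using fpi_run_start[OF assms(1)] by auto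
next
  case False
  then obtain j where "i = Suc j" "2 \<le> j" "j < k"
    using assms(3) by (metis Suc_pred' less_Suc_eq_le not_le not_less_eq_eq zero_less_iff_neq_zero)
  then show ?thesis using assms(1) unfolding fpi_run_def by auto
qed

lemma fpi_run_farthest:
  assumes "fpi_run M d k q" "2 \<le> j" "j < k" "x \<in> M"
  shows "dist_set d x (q ` {1..j}) \<le> dist_set d (q (Suc j)) (q ` {1..j})"
  using assms unfolding fpi_run_def by auto

lemma fpi_run_first_distinct:
  assumes "finite M" "metric_on M d" "2 \<le> card M" "fpi_run M d k q"
  shows "q 1 \<noteq> q 2"
proof
  assume "q 1 = q 2"
  then have "diameter M d = 0"
    using fpi_run_start[OF assms(4)] metric_on_zero[OF assms(2)] by metis
  moreover obtain a b where "a \<in> M" "b \<in> M" "a \<noteq> b"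
    using two_le_card_obtains_distinct assms(3) .
  ultimately show False
    using metric_on_pos[OF assms(2)] diameter_ge[OF assms(1), of a b d] by fastforce
qed

text \<open>Some point lies outside the current centers, at positive distance from them, so the
  farthest point does too.\<close>
lemma fpi_run_new_point:
  assumes "finite M" "metric_on M d" "k < card M" "fpi_run M d k q" "2 \<le> j" "j < k"
  shows "q (Suc j) \<notin> q ` {1..j}"
proof
  let ?U = "q ` {1..j}"
  assume new: "q (Suc j) \<in> ?U"
  have "card ?U < card M"
    using card_image_le[of "{1..j}" q] assms(3,6) by simp
  then obtain x where x: "x \<in> M" "x \<notin> ?U"
    using card_mono[OF finite_imageI[OF finite_atLeastAtMost]] by (meson not_le subsetI)
  have U: "finite ?U" "?U \<noteq> {}" "?U \<subseteq> M"
    using assms(5,6) fpi_run_in_carrier[OF assms(4)] by auto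
  obtain u where u: "u \<in> ?U" "dist_set d x ?U = d x u"
    using dist_set_attained U(1,2) .
  have "0 < dist_set d x ?U"
    using metric_on_pos[OF assms(2) x(1)] u x(2) U(3) by auto
  also have "\<dots> \<le> dist_set d (q (Suc j)) ?U"
    using fpi_run_farthest assms(4-6) x(1) .
  also have "\<dots> \<le> d (q (Suc j)) (q (Suc j))"
    using dist_set_le U(1) new .
  finally show False
    using metric_on_zero[OF assms(2)] fpi_run_in_carrier[OF assms(4), of "Suc j"] assms(6) by simp
qed

lemma fpi_run_inj_on:
  assumes "finite M" "metric_on M d" "k < card M" "fpi_run M d k q"
  shows "inj_on q {1..k}"
proof (rule linorder_inj_onI')
  fix i j assume ij: "i \<in> {1..k}" "j \<in> {1..k}" "i < j"
  show "q i \<noteq> q j"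
  proof (cases "j = 2")
    case True
    with ij have "i = 1" by auto
    then show ?thesis
      using True ij fpi_run_first_distinct[OF assms(1,2) _ assms(4)] assms(3) by auto
  next
    case False
    then have "q (Suc (j - 1)) \<notin> q ` {1..j - 1}"
      using ij by (intro fpi_run_new_point[OF assms]) auto
    moreover have "Suc (j - 1) = j" "i \<in> {1..j - 1}" using ij by auto
    ultimately show ?thesis by (metis image_eqI)
  qed
qed

lemma fpi_run_dist_set_le_pair:
  assumes "finite M" "metric_on M d" "fpi_run M d k q" "x \<in> M" "1 \<le> i" "i < j" "j \<le> k"
  shows "dist_set d x (q ` {1..k - 1}) \<le> d (q i) (q j)"
proof (cases "j = 2")
  case True
  then have "i = 1" using assms(5,6) by auto
  have "dist_set d x (q ` {1..k - 1}) \<le> d x (q 1)"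
    using True assms(7) by (intro dist_set_le) auto
  also have "\<dots> \<le> d (q 1) (q 2)"
    using diameter_ge[OF assms(1) assms(4)] fpi_run_start[OF assms(3)] by simp
  finally show ?thesis using True \<open>i = 1\<close> by simp
next
  case False
  then have j: "3 \<le> j" using assms(5,6) by auto
  let ?T = "q ` {1..k - 1}" and ?U = "q ` {1..j - 1}"
  have "dist_set d x ?T \<le> dist_set d (q (Suc (k - 1))) ?T"
    using j assms(7) by (intro fpi_run_farthest[OF assms(3) _ _ assms(4)]) auto
  also have "\<dots> \<le> dist_set d (q k) ?U"
    using j assms(7) by (auto intro!: dist_set_antimono)
  also have "\<dots> \<le> dist_set d (q (Suc (j - 1))) ?U"
    using j assms(7) by (intro fpi_run_farthest[OF assms(3)] fpi_run_in_carrier[OF assms(3)]) auto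
  also have "\<dots> \<le> d (q j) (q i)"
    using j assms(5,6) by (auto intro!: dist_set_le)
  also have "\<dots> = d (q i) (q j)"
    using metric_on_sym[OF assms(2)] fpi_run_in_carrier[OF assms(3)] assms(5-7) by simp
  finally show ?thesis .
qed

lemma fpi_run_covering_radius_le_packing_radius:
  assumes "finite M" "metric_on M d" "2 \<le> k" "k < card M" "fpi_run M d k q"
  shows "covering_radius M d (q ` {1..k - 1}) \<le> 2 * packing_radius d (q ` {1..k})"
proof (rule covering_radius_le[OF assms(1)])
  show "M \<noteq> {}" using assms(4) by auto
  fix x assume x: "x \<in> M"
  have "q 1 \<in> q ` {1..k}" "q 2 \<in> q ` {1..k}" "q 1 \<noteq> q 2"
    using inj_onD[OF fpi_run_inj_on[OF assms(1,2,4,5)], of 1 2] assms(3) by auto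
  then obtain a b where ab: "a \<in> q ` {1..k}" "b \<in> q ` {1..k}" "a \<noteq> b"
      "2 * packing_radius d (q ` {1..k}) = d a b"
    by (rule packing_radius_attained[OF finite_imageI[OF finite_atLeastAtMost]])
  obtain i j where "i \<in> {1..k}" "j \<in> {1..k}" "a = q i" "b = q j"
    using ab(1,2) by blast
  with ab(3) have ij: "i \<in> {1..k}" "j \<in> {1..k}" "a = q i" "b = q j" "i \<noteq> j"
    by auto
  show "dist_set d x (q ` {1..k - 1}) \<le> 2 * packing_radius d (q ` {1..k})"
  proof (cases "i < j")
    case True
    then show ?thesis
      using fpi_run_dist_set_le_pair[OF assms(1,2,5) x] ij ab(4) by auto
  next
    case False
    then have "dist_set d x (q ` {1..k - 1}) \<le> d (q j) (q i)"
      using fpi_run_dist_set_le_pair[OF assms(1,2,5) x] ij by auto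
    also have "\<dots> = 2 * packing_radius d (q ` {1..k})"
      using ab(4) ij metric_on_sym[OF assms(2)] fpi_run_in_carrier[OF assms(5)] by auto
    finally show ?thesis .
  qed
qed

text \<open>R and r stand for the covering and packing radius of the greedy set,
  R' and r' for those of an optimal one.\<close>
lemma ratio_le_rho_mult:
  fixes R r R' r' :: real
  assumes "0 < r" "0 < r'" "0 \<le> R'" "R \<le> 2 * r" "R \<le> 2 * R'" "2 * r' \<le> 2 * r + R'"
  shows "R / r \<le> rho (R' / r') * (R' / r')"
proof (cases "2/3 \<le> R' / r'")
  case True
  then have "rho (R' / r') * (R' / r') = 2" unfolding rho_def by auto
  then show ?thesis using assms(1,4) by (simp add: field_simps)
next
  case False
  define \<alpha> where "\<alpha> = R' / r'"
  have R': "R' = \<alpha> * r'" using assms(2) unfolding \<alpha>_def by simp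
  have "0 \<le> \<alpha>" "\<alpha> < 2"
    using False assms(2,3) unfolding \<alpha>_def by (simp, linarith)
  have "R * (2 - \<alpha>) \<le> 2 * \<alpha> * r' * (2 - \<alpha>)"
    using assms(5) R' \<open>\<alpha> < 2\<close> by (intro mult_right_mono) auto
  also have "\<dots> = 2 * \<alpha> * ((2 - \<alpha>) * r')" by simp
  also have "\<dots> \<le> 2 * \<alpha> * (2 * r)"
    using assms(6) R' \<open>0 \<le> \<alpha>\<close> by (intro mult_left_mono) (auto simp: algebra_simps)
  finally have "R / r \<le> 4 * \<alpha> / (2 - \<alpha>)"
    using assms(1) \<open>\<alpha> < 2\<close> by (simp add: divide_simps)
  moreover have "rho \<alpha> * \<alpha> = 4 * \<alpha> / (2 - \<alpha>)"
    using False unfolding rho_def \<alpha>_def by simp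
  ultimately show ?thesis unfolding \<alpha>_def by simp
qed

lemma rho_bounds:
  "(1 \<le> \<alpha> \<longrightarrow> rho \<alpha> \<le> 2) \<and> (2/3 \<le> \<alpha> \<and> \<alpha> < 1 \<longrightarrow> rho \<alpha> \<le> 3) \<and> (\<alpha> < 2/3 \<longrightarrow> rho \<alpha> < 3)"
  unfolding rho_def by (auto simp: divide_simps)

theorem theorem8:
  fixes M :: "'a set" and d :: "'a \<Rightarrow> 'a \<Rightarrow> real" and k :: nat and q :: "nat \<Rightarrow> 'a"
  assumes "finite M" and "metric_on M d"
    and "2 \<le> k" and "k < card M"
    and "fpi_run M d k q"
  shows "gap_ratio M d (q ` {1..k}) \<le> rho (opt_gap_ratio M d k) * opt_gap_ratio M d k
         \<and> (1 \<le> opt_gap_ratio M d k \<longrightarrow> rho (opt_gap_ratio M d k) \<le> 2)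
         \<and> (2/3 \<le> opt_gap_ratio M d k \<and> opt_gap_ratio M d k < 1 \<longrightarrow> rho (opt_gap_ratio M d k) \<le> 3)
         \<and> (opt_gap_ratio M d k < 2/3 \<longrightarrow> rho (opt_gap_ratio M d k) < 3)"
proof -
  define S where "S = q ` {1..k}"
  define T where "T = q ` {1..k - 1}"
  obtain P where P: "P \<subset> M" "card P = k" and opt: "opt_gap_ratio M d k = gap_ratio M d P"
    using opt_gap_ratio_attained assms(1,4) .
  have cardS: "card S = k"
    unfolding S_def using card_image[OF fpi_run_inj_on[OF assms(1,2,4,5)]] by simp
  have cardT: "card T < k"
    unfolding T_def using card_image_le[of "{1..k - 1}" q] assms(3) by simp
  have sets: "S \<subseteq> M" "T \<subseteq> M" "T \<subseteq> S" "T \<noteq> {}" "P \<subseteq> M" "M \<noteq> {}"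
    unfolding S_def T_def using fpi_run_in_carrier[OF assms(5)] assms(3,4) P(1) by auto
  have RT: "covering_radius M d T \<le> 2 * packing_radius d S"
    unfolding S_def T_def by (rule fpi_run_covering_radius_le_packing_radius[OF assms])
  have RS: "covering_radius M d S \<le> covering_radius M d T"
    using covering_radius_antimono[OF assms(1) sets(6) _ sets(4,3)] sets(1) assms(1)
      finite_subset by blast
  have "2 * packing_radius d P \<le> covering_radius M d T + covering_radius M d P"
    using twice_packing_radius_le_covering_radii[OF assms(1,2) sets(5,2,4)] cardT P(2) by simp
  moreover have "min (covering_radius M d S) (2 * packing_radius d S) \<le> 2 * covering_radius M d P"
    using min_covering_twice_packing_le_twice_covering[OF assms(1,2) sets(1,5)] P(2) cardS
      assms(3) by fastforce
  moreover have "0 < packing_radius d S" "0 < packing_radius d P"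
    using packing_radius_pos[OF assms(2)] sets(1,5) cardS P(2) assms(3) by auto
  moreover have "0 \<le> covering_radius M d P"
    using covering_radius_nonneg[OF assms(1,2) sets(5)] P(2) assms(3) by (cases "P = {}") auto
  ultimately have "gap_ratio M d S \<le> rho (gap_ratio M d P) * gap_ratio M d P"
    unfolding gap_ratio_def using RT RS by (intro ratio_le_rho_mult) auto
  then show ?thesis using rho_bounds unfolding opt S_def by blast
qed

end
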